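(* Let $F$, $H$, $X$, $\Omega$, $Q$ and the sequences generated by the IneIREG method be as described in the context, and suppose $H$ is $\mu$-strongly monotone for some $\mu>0$. Suppose $\eta_k\equiv\eta>0$; $\lambda_k\in[\underline\lambda,\overline\lambda]$ for all $k\ge0$ with $0<\underline\lambda\le\overline\lambda<1/L$, $L:=L_F+\eta L_H$; and $\alpha_0\in[0,1]$ and $\alpha_{k+1}\le(1-\beta_k)\alpha_k$ for all $k\ge0$, where $\beta_k:=\big(\frac{1}{1-\lambda_k^2L^2}+\frac{1}{2\lambda_k\eta\mu}\big)^{-1}$. Define $p_{-1}:=1$, $p_k:=\big(\prod_{i=0}^k(1-\beta_i)\big)^{-1}$ for $k\ge0$, for $k\ge1$ $\Lambda_k:=\sum_{j=0}^{k-1}\lambda_j\eta p_j$ and $\overline y_k:=\Lambda_k^{-1}\sum_{j=0}^{k-1}\lambda_j\eta p_jy_j$, and $\beta:=\big(\frac{1}{1-\overline\lambda^2L^2}+\frac{1}{2\underline\lambda\eta\mu}\big)^{-1}\in(0,1)$. Then for all $k\ge1$, $$0\le\mathrm{Gap}(\overline y_k,F,X)\le\frac{(1-\beta)^k}{2\underline\lambda}\Big(D_X^2+\sum_{j=0}^{k-1}p_{j-1}\delta_j\Big)+\eta\Big(\frac{\overline\lambda C_HD_X}{\underline\lambda}\Big).$$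
   Context: Work in $\mathbb{R}^n$ with Euclidean inner product $\langle\cdot,\cdot\rangle$ and norm $\|\cdot\|$. The maps $F\colon \mathrm{Dom}\,F\to\mathbb{R}^n$ and $H\colon\mathrm{Dom}\,H\to\mathbb{R}^n$ are monotone and Lipschitz continuous with constants $L_F>0$ and $L_H>0$; $H$ is $\mu$-strongly monotone means $\langle H(x)-H(y),x-y\rangle\ge\mu\|x-y\|^2$ for all $x,y\in\mathrm{Dom}\,H$. $X$ is a nonempty compact convex set and $\Omega$ a nonempty closed convex set with $X\subset\Omega\subset\mathrm{Dom}\,F\cap\mathrm{Dom}\,H$; $P_X,P_\Omega$ denote orthogonal projections. $Q:=\{x\in X:\langle F(x),y-x\rangle\ge0\ \forall y\in X\}$ is assumed nonempty. $D_X:=\sup_{x,y\in X}\|x-y\|$, $C_H:=\sup_{x\in X}\|H(x)\|$. $\mathrm{Gap}(z,F,X):=\sup_{x\in X}\langle F(x),z-x\rangle$. IneIREG method: start with $x_0=x_{-1}\in X$; for $k=0,1,\dots$, with parameters $\alpha_k\ge0$, $\lambda_k>0$, $\eta_k>0$, set $w_k=x_k+\alpha_k(x_k-x_{k-1})$, $w'_k=P_\Omega(w_k)$, $y_k=P_X\big(w_k-\lambda_k(F(w'_k)+\eta_kH(w'_k))\big)$, $x_{k+1}=P_X\big(w_k-\lambda_k(F(y_k)+\eta_kH(y_k))\big)$. Also $\delta_k:=\alpha_k(1+\alpha_k)\|x_k-x_{k-1}\|^2$ for $k\ge0$. *)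

theory Defs
  imports "HOL-Analysis.Analysis"
begin

definition monotone_op :: "('a::real_inner \<Rightarrow> 'a) \<Rightarrow> 'a set \<Rightarrow> bool" where
  "monotone_op F D \<longleftrightarrow> (\<forall>x\<in>D. \<forall>y\<in>D. inner (F x - F y) (x - y) \<ge> 0)"

definition strongly_monotone_op :: "real \<Rightarrow> ('a::real_inner \<Rightarrow> 'a) \<Rightarrow> 'a set \<Rightarrow> bool" where
  "strongly_monotone_op \<mu> F D \<longleftrightarrow>
     (\<forall>x\<in>D. \<forall>y\<in>D. inner (F x - F y) (x - y) \<ge> \<mu> * (norm (x - y))\<^sup>2)"

definition VI_sol :: "('a::real_inner \<Rightarrow> 'a) \<Rightarrow> 'a set \<Rightarrow> 'a set" where
  "VI_sol F X = {x\<in>X. \<forall>y\<in>X. inner (F x) (y - x) \<ge> 0}"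

definition Gap :: "'a::real_inner \<Rightarrow> ('a \<Rightarrow> 'a) \<Rightarrow> 'a set \<Rightarrow> real" where
  "Gap z F X = (SUP x\<in>X. inner (F x) (z - x))"

definition prev_it :: "(nat \<Rightarrow> 'a) \<Rightarrow> nat \<Rightarrow> 'a" where
  "prev_it x k = (if k = 0 then x 0 else x (k - 1))"

end

theory Submission
  imports Defs
begin

text \<open>Every IneIREG step is an extragradient step for the regularized operator \<open>F + \<eta> H\<close>,
  taken from the inertial point \<open>w\<^sub>k\<close>. The two projection inequalities, the Lipschitz bound
  for \<open>F + \<eta> H\<close> and the strong monotonicity of \<open>\<eta> H\<close> give, for every \<open>v \<in> X\<close>,
  \<open>\<parallel>x\<^sub>k\<^sub>+\<^sub>1 - v\<parallel>\<^sup>2 \<le> (1 - \<beta>\<^sub>k) \<parallel>w\<^sub>k - v\<parallel>\<^sup>2 + 2 \<lambda>\<^sub>k (\<langle>F v, v - y\<^sub>k\<rangle> + \<eta> C\<^sub>H D\<^sub>X)\<close>,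
  where monotonicity of \<open>F\<close> has replaced \<open>F y\<^sub>k\<close> by \<open>F v\<close>. Expanding \<open>\<parallel>w\<^sub>k - v\<parallel>\<^sup>2\<close> along
  the extrapolation and multiplying by \<open>p\<^sub>k\<close>, which absorbs the factors \<open>1 - \<beta>\<^sub>k\<close>, the inertial
  terms telescope because \<open>p\<^sub>k \<alpha>\<^sub>k\<^sub>+\<^sub>1 \<le> p\<^sub>k\<^sub>-\<^sub>1 \<alpha>\<^sub>k\<close>. What is left bounds the weighted sum of
  the \<open>\<langle>F v, v - y\<^sub>j\<rangle>\<close>, i.e. \<open>\<langle>F v, v - ybar\<^sub>k\<rangle>\<close>, uniformly in \<open>v\<close>; the rate comes from
  \<open>\<Lambda>\<^sub>k \<ge> \<lambda> \<eta> p\<^sub>k\<^sub>-\<^sub>1\<close> and \<open>1 / p\<^sub>k\<^sub>-\<^sub>1 \<le> (1 - \<beta>)\<^sup>k\<close>.\<close>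

definition parallel_sum :: "real \<Rightarrow> real \<Rightarrow> real" where
  "parallel_sum a b = inverse (1 / a + 1 / b)"

lemma parallel_sum_pos: "0 < a \<Longrightarrow> 0 < b \<Longrightarrow> 0 < parallel_sum a b"
  by (simp add: parallel_sum_def add_pos_pos)

lemma parallel_sum_less_left: "0 < a \<Longrightarrow> 0 < b \<Longrightarrow> parallel_sum a b < a"
  by (simp add: parallel_sum_def field_simps)

lemma parallel_sum_mono:
  assumes "0 < a" "a \<le> a'" "0 < b" "b \<le> b'"
  shows "parallel_sum a b \<le> parallel_sum a' b'"
  unfolding parallel_sum_def using assms
  by (intro le_imp_inverse_le add_mono divide_left_mono) (auto intro: add_pos_pos)

lemma parallel_sum_norm_add_squared_le:
  fixes p q :: "'a::real_normed_vector"
  assumes a: "0 < a" and b: "0 < b"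
  shows "parallel_sum a b * (norm (p + q))\<^sup>2 \<le> a * (norm p)\<^sup>2 + b * (norm q)\<^sup>2"
proof -
  have "a * b * (norm (p + q))\<^sup>2 \<le> a * b * (norm p + norm q)\<^sup>2"
    using a b by (simp add: norm_triangle_ineq power_mono)
  also have "\<dots> \<le> (a + b) * (a * (norm p)\<^sup>2 + b * (norm q)\<^sup>2)"
    using sum_power2_ge_zero[of "a * norm p - b * norm q" 0]
    by (simp add: power2_eq_square algebra_simps)
  finally show ?thesis
    using a b by (simp add: parallel_sum_def field_simps)
qed

lemma norm_extrapolation_squared:
  fixes x z v :: "'a::real_inner"
  shows "(norm (x + t *\<^sub>R (x - z) - v))\<^sup>2 =
    (1 + t) * (norm (x - v))\<^sup>2 - t * (norm (z - v))\<^sup>2 + t * (1 + t) * (norm (x - z))\<^sup>2"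
  unfolding power2_norm_eq_inner
  by (simp add: inner_commute algebra_simps)

lemma extragradient_inequality:
  fixes w y u v g g' :: "'a::real_inner"
  assumes y: "inner (w - lam *\<^sub>R g - y) (u - y) \<le> 0"
    and u: "inner (w - lam *\<^sub>R g' - u) (v - u) \<le> 0"
    and lip: "norm (g - g') \<le> L * norm (w - y)" and lam: "0 \<le> lam" and L: "0 \<le> L"
  shows "(norm (u - v))\<^sup>2 \<le> (norm (w - v))\<^sup>2 - (1 - lam\<^sup>2 * L\<^sup>2) * (norm (w - y))\<^sup>2
           + 2 * lam * inner g' (v - y)"
proof -
  define a b c where "a = w - y" and "b = y - u" and "c = u - v"
  have ab: "lam * inner g b \<le> inner a b"
    using y by (simp add: a_def b_def inner_diff_left inner_diff_right algebra_simps)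
  have ac: "lam * inner g' c \<le> inner a c + inner b c"
    using u by (simp add: a_def b_def c_def inner_diff_left inner_diff_right algebra_simps)
  have "inner (g - g') b \<ge> - (L * norm a * norm b)"
  proof -
    have "\<bar>inner (g - g') b\<bar> \<le> L * norm a * norm b"
      using Cauchy_Schwarz_ineq2[of "g - g'" b] lip
      by (simp add: a_def order_trans[OF _ mult_right_mono])
    then show ?thesis by linarith
  qed
  then have gb: "lam * inner g b - lam * inner g' b \<ge> - (lam * L * norm a * norm b)"
    using mult_left_mono[OF _ lam] by (fastforce simp: inner_diff_left algebra_simps)
  have wv: "(norm (w - v))\<^sup>2 = (norm a)\<^sup>2 + (norm b)\<^sup>2 + (norm c)\<^sup>2
      + 2 * inner a b + 2 * inner a c + 2 * inner b c"
    unfolding power2_norm_eq_inner by (simp add: a_def b_def c_def inner_commute algebra_simps)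
  have g'vy: "inner g' (v - y) = - inner g' b - inner g' c"
    by (simp add: b_def c_def inner_diff_right)
  \<comment> \<open>what remains is \<open>0 \<le> (norm b - lam * L * norm a)\<^sup>2\<close>\<close>
  show ?thesis
    unfolding wv g'vy a_def[symmetric] c_def[symmetric]
    using ab ac gb sum_power2_ge_zero[of "norm b - lam * L * norm a" 0]
    by (simp add: power2_eq_square algebra_simps)
qed

lemma extragradient_projection_inequality:
  fixes X :: "'a::euclidean_space set"
  assumes X: "convex X" "closed X" and "v \<in> X"
    and y: "y = closest_point X (w - lam *\<^sub>R g)"
    and u: "u = closest_point X (w - lam *\<^sub>R g')"
    and "norm (g - g') \<le> L * norm (w - y)" "0 \<le> lam" "0 \<le> L"
  shows "(norm (u - v))\<^sup>2 \<le> (norm (w - v))\<^sup>2 - (1 - lam\<^sup>2 * L\<^sup>2) * (norm (w - y))\<^sup>2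
           + 2 * lam * inner g' (v - y)"
proof (rule extragradient_inequality)
  have "u \<in> X"
    using u \<open>v \<in> X\<close> closest_point_in_set[OF \<open>closed X\<close>] by blast
  then show "inner (w - lam *\<^sub>R g - y) (u - y) \<le> 0"
    unfolding y by (rule closest_point_dot[OF X])
  show "inner (w - lam *\<^sub>R g' - u) (v - u) \<le> 0"
    unfolding u by (rule closest_point_dot[OF X \<open>v \<in> X\<close>])
qed (use assms in auto)

lemma regularized_operator_inner_le:
  fixes F H :: "'a::real_inner \<Rightarrow> 'a"
  assumes F: "0 \<le> inner (F v - F y) (v - y)"
    and H: "\<mu> * (norm (v - y))\<^sup>2 \<le> inner (H v - H y) (v - y)"
    and C: "norm (H v) \<le> C" and D: "norm (v - y) \<le> D" and \<eta>: "0 \<le> \<eta>"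
  shows "inner (F y + \<eta> *\<^sub>R H y) (v - y)
           \<le> inner (F v) (v - y) + \<eta> * (C * D - \<mu> * (norm (v - y))\<^sup>2)"
proof -
  have "inner (H v) (v - y) \<le> norm (H v) * norm (v - y)" by (rule norm_cauchy_schwarz)
  also have "\<dots> \<le> C * D" using C D by (intro mult_mono) (auto intro: order_trans[OF norm_ge_zero])
  finally have "inner (H y) (v - y) \<le> C * D - \<mu> * (norm (v - y))\<^sup>2"
    using H by (simp add: inner_diff_left)
  then have "\<eta> * inner (H y) (v - y) \<le> \<eta> * (C * D - \<mu> * (norm (v - y))\<^sup>2)"
    using \<eta> by (rule mult_left_mono)
  then show ?thesis using F by (simp add: inner_add_left inner_diff_left)
qed

lemma inertial_telescoping:
  fixes \<phi> a d r c p :: "nat \<Rightarrow> real"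
  assumes step: "\<And>k. \<phi> (Suc k) \<le> c k * ((1 + a k) * \<phi> k - a k * prev_it \<phi> k + d k) + r k"
    and p_Suc: "\<And>k. p (Suc k) * c k = p k" and p0: "p 0 = 1" and p_pos: "\<And>k. 0 < p k"
    and \<phi>_bounds: "\<And>k. 0 \<le> \<phi> k \<and> \<phi> k \<le> D"
    and a0: "a 0 \<le> 1" and a_nonneg: "\<And>k. 0 \<le> a k"
    and pa_decreasing: "\<And>k. p (Suc k) * a (Suc k) \<le> p k * a k"
  shows "0 \<le> D + (\<Sum>j<K. p j * d j + p (Suc j) * r j)"
proof -
  define S where "S K = (\<Sum>j<K. p j * d j + p (Suc j) * r j)" for K
  have invariant: "p K * (\<phi> K - a K * prev_it \<phi> K) \<le> D * (1 - p K * a K) + S K" for K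
  proof (induction K)
    case 0
    have "(1 - a 0) * \<phi> 0 \<le> (1 - a 0) * D"
      using a0 \<phi>_bounds[of 0] by (intro mult_left_mono) auto
    then show ?case by (simp add: p0 prev_it_def S_def algebra_simps)
  next
    case (Suc K)
    have "p (Suc K) * \<phi> (Suc K)
        \<le> p (Suc K) * (c K * ((1 + a K) * \<phi> K - a K * prev_it \<phi> K + d K) + r K)"
      using step[of K] p_pos[of "Suc K"] by (intro mult_left_mono) auto
    also have "\<dots> = p K * ((1 + a K) * \<phi> K - a K * prev_it \<phi> K + d K) + p (Suc K) * r K"
      by (simp add: distrib_left mult.assoc[symmetric] p_Suc)
    finally have "p (Suc K) * \<phi> (Suc K)
        \<le> p K * ((1 + a K) * \<phi> K - a K * prev_it \<phi> K + d K) + p (Suc K) * r K" .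
    moreover have "(p K * a K - p (Suc K) * a (Suc K)) * \<phi> K
        \<le> (p K * a K - p (Suc K) * a (Suc K)) * D"
      using pa_decreasing[of K] \<phi>_bounds[of K] by (intro mult_left_mono) auto
    ultimately show ?case
      using Suc.IH by (simp add: prev_it_def S_def algebra_simps)
  qed
  have "prev_it \<phi> K \<le> D" using \<phi>_bounds by (simp add: prev_it_def)
  then have "p K * a K * prev_it \<phi> K \<le> p K * a K * D"
    using p_pos[of K] a_nonneg[of K] by (intro mult_left_mono) auto
  moreover have "0 \<le> p K * \<phi> K" using p_pos[of K] \<phi>_bounds[of K] by simp
  ultimately show ?thesis using invariant[of K] by (simp add: S_def algebra_simps)
qed

lemma Gap_le:
  assumes "X \<noteq> {}" and "\<And>v. v \<in> X \<Longrightarrow> inner (F v) (z - v) \<le> B"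
  shows "Gap z F X \<le> B"
  unfolding Gap_def using assms by (rule cSUP_least)

lemma Gap_nonneg:
  assumes "z \<in> X" and "\<And>v. v \<in> X \<Longrightarrow> inner (F v) (z - v) \<le> B"
  shows "0 \<le> Gap z F X"
proof -
  have "inner (F z) (z - z) \<le> Gap z F X"
    unfolding Gap_def by (rule cSUP_upper[OF assms(1) bdd_aboveI2[OF assms(2)]])
  then show ?thesis by simp
qed

lemma weighted_mean_in_convex:
  fixes y :: "'i \<Rightarrow> 'a::real_vector"
  assumes "convex S" "finite I" "0 < sum c I"
    and "\<And>i. i \<in> I \<Longrightarrow> 0 \<le> c i" "\<And>i. i \<in> I \<Longrightarrow> y i \<in> S"
  shows "inverse (sum c I) *\<^sub>R (\<Sum>i\<in>I. c i *\<^sub>R y i) \<in> S"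
proof -
  have "inverse (sum c I) *\<^sub>R (\<Sum>i\<in>I. c i *\<^sub>R y i) = (\<Sum>i\<in>I. (inverse (sum c I) * c i) *\<^sub>R y i)"
    by (simp add: scaleR_sum_right)
  also have "\<dots> \<in> S"
    using assms by (intro convex_sum) (auto simp flip: sum_distrib_left)
  finally show ?thesis .
qed

lemma inner_weighted_mean:
  fixes y :: "'i \<Rightarrow> 'a::real_inner"
  assumes "sum c I \<noteq> 0"
  shows "(\<Sum>i\<in>I. c i * inner a (y i - v))
           = sum c I * inner a (inverse (sum c I) *\<^sub>R (\<Sum>i\<in>I. c i *\<^sub>R y i) - v)"
proof -
  have "(\<Sum>i\<in>I. c i * inner a (y i - v)) = inner a (\<Sum>i\<in>I. c i *\<^sub>R y i) - sum c I * inner a v"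
    by (simp add: inner_diff_right inner_sum_right right_diff_distrib sum_subtractf sum_distrib_right)
  then show ?thesis
    using assms by (simp add: inner_diff_right right_diff_distrib)
qed

locale inertial_regularized_extragradient =
  fixes F H :: "'a::euclidean_space \<Rightarrow> 'a"
    and X \<Omega> :: "'a set"
    and LF LH \<mu> \<eta> lam_lo lam_hi :: real
    and lam alpha :: "nat \<Rightarrow> real"
    and x w w' y :: "nat \<Rightarrow> 'a"
  assumes F_monotone: "monotone_op F X"
    and H_strongly_monotone: "strongly_monotone_op \<mu> H X"
    and F_lipschitz: "lipschitz_on LF \<Omega> F" and H_lipschitz: "lipschitz_on LH \<Omega> H"
    and mu_pos: "0 < \<mu>" and eta_pos: "0 < \<eta>"
    and X_compact: "compact X" and X_convex: "convex X"
    and \<Omega>_closed: "closed \<Omega>" and \<Omega>_convex: "convex \<Omega>" and X_subset: "X \<subseteq> \<Omega>"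
    and lam_bounds: "\<And>k. lam_lo \<le> lam k \<and> lam k \<le> lam_hi"
    and lam_lo_pos: "0 < lam_lo" and lam_hi_less: "lam_hi < 1 / (LF + \<eta> * LH)"
    and alpha_nonneg: "\<And>k. 0 \<le> alpha k" and alpha0: "alpha 0 \<le> 1"
    and alpha_Suc: "\<And>k. alpha (Suc k) \<le>
          (1 - inverse (1 / (1 - (lam k)\<^sup>2 * (LF + \<eta> * LH)\<^sup>2) + 1 / (2 * lam k * \<eta> * \<mu>))) * alpha k"
    and x0: "x 0 \<in> X"
    and w_def: "\<And>k. w k = x k + alpha k *\<^sub>R (x k - prev_it x k)"
    and w'_def: "\<And>k. w' k = closest_point \<Omega> (w k)"
    and y_def: "\<And>k. y k = closest_point X (w k - lam k *\<^sub>R (F (w' k) + \<eta> *\<^sub>R H (w' k)))"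
    and x_Suc: "\<And>k. x (Suc k) = closest_point X (w k - lam k *\<^sub>R (F (y k) + \<eta> *\<^sub>R H (y k)))"
begin

definition L :: real where "L = LF + \<eta> * LH"

definition G :: "'a \<Rightarrow> 'a" where "G z = F z + \<eta> *\<^sub>R H z"

definition beta :: "nat \<Rightarrow> real" where
  "beta k = parallel_sum (1 - (lam k)\<^sup>2 * L\<^sup>2) (2 * lam k * \<eta> * \<mu>)"

definition beta_lo :: real where
  "beta_lo = parallel_sum (1 - lam_hi\<^sup>2 * L\<^sup>2) (2 * lam_lo * \<eta> * \<mu>)"

text \<open>\<open>p k\<close> is the paper's \<open>p\<^sub>k\<^sub>-\<^sub>1\<close>, so that \<open>p 0 = 1\<close> is its \<open>p\<^sub>-\<^sub>1\<close>.\<close>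
definition p :: "nat \<Rightarrow> real" where "p k = inverse (\<Prod>i<k. 1 - beta i)"

definition delta :: "nat \<Rightarrow> real" where
  "delta k = alpha k * (1 + alpha k) * (norm (x k - prev_it x k))\<^sup>2"

definition D_X :: real where "D_X = diameter X"

definition C_H :: real where "C_H = (SUP z\<in>X. norm (H z))"

definition Lam :: "nat \<Rightarrow> real" where "Lam k = (\<Sum>j<k. lam j * \<eta> * p (Suc j))"

definition ybar :: "nat \<Rightarrow> 'a" where
  "ybar k = inverse (Lam k) *\<^sub>R (\<Sum>j<k. (lam j * \<eta> * p (Suc j)) *\<^sub>R y j)"

lemma X_closed: "closed X" and X_nonempty: "X \<noteq> {}"
  using X_compact x0 by (auto intro: compact_imp_closed)

lemma x_in_X: "x k \<in> X"
  by (cases k) (auto simp: x_Suc x0 closest_point_in_set[OF X_closed X_nonempty])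

lemma y_in_X: "y k \<in> X"
  by (simp add: y_def closest_point_in_set[OF X_closed X_nonempty])

lemma w'_in_\<Omega>: "w' k \<in> \<Omega>"
proof -
  have "\<Omega> \<noteq> {}" using X_subset X_nonempty by blast
  then show ?thesis by (simp add: w'_def closest_point_in_set[OF \<Omega>_closed])
qed

lemma norm_diff_le_D_X: "a \<in> X \<Longrightarrow> b \<in> X \<Longrightarrow> norm (a - b) \<le> D_X"
  using diameter_bounded_bound[OF compact_imp_bounded[OF X_compact]]
  by (simp add: D_X_def dist_norm)

lemma D_X_nonneg: "0 \<le> D_X"
  using norm_diff_le_D_X[OF x0 x0] by simp

lemma norm_H_le_C_H:
  assumes "z \<in> X" shows "norm (H z) \<le> C_H"
proof -
  have "continuous_on X H"
    using lipschitz_on_subset[OF H_lipschitz X_subset] by (rule lipschitz_on_continuous_on)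
  then have "bounded (H ` X)"
    using X_compact by (intro compact_imp_bounded compact_continuous_image)
  then have "bdd_above ((\<lambda>z. norm (H z)) ` X)"
    by (auto simp: bounded_iff bdd_above_def)
  then show ?thesis
    unfolding C_H_def by (rule cSUP_upper[OF assms])
qed

lemma C_H_nonneg: "0 \<le> C_H"
  using norm_H_le_C_H[OF x0] norm_ge_zero order_trans by blast

lemma G_lipschitz: "lipschitz_on L \<Omega> G"
  unfolding L_def G_def[abs_def] using eta_pos
  by (intro lipschitz_on_add F_lipschitz lipschitz_on_cmult_nonneg H_lipschitz) auto

lemma L_pos: "0 < L"
proof -
  have "0 \<le> L" using lipschitz_on_nonneg[OF G_lipschitz] .
  moreover have "0 < lam_hi" using lam_bounds[of 0] lam_lo_pos by linarith
  ultimately show ?thesis using lam_hi_less by (cases "L = 0") (auto simp: L_def)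
qed

lemma lam_pos: "0 < lam k"
  using lam_bounds[of k] lam_lo_pos by linarith

lemma lam_squared_L_squared_less: "0 < t \<Longrightarrow> t \<le> lam_hi \<Longrightarrow> t\<^sup>2 * L\<^sup>2 < 1"
proof -
  assume "0 < t" "t \<le> lam_hi"
  then have "t * L \<le> lam_hi * L"
    using L_pos by (intro mult_right_mono) auto
  also have "\<dots> < 1"
    using lam_hi_less L_pos by (simp add: L_def field_simps)
  finally have "t * L < 1" .
  then have "(t * L)\<^sup>2 < 1\<^sup>2"
    using \<open>0 < t\<close> L_pos by (intro power_strict_mono) auto
  then show ?thesis by (simp add: power_mult_distrib)
qed

lemma beta_parameters_pos: "0 < 1 - (lam k)\<^sup>2 * L\<^sup>2" "0 < 2 * lam k * \<eta> * \<mu>"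
  using lam_squared_L_squared_less[OF lam_pos] lam_bounds[of k] lam_pos[of k] eta_pos mu_pos
  by auto

lemma beta_bounds: "beta_lo \<le> beta k" "0 < beta k" "beta k < 1"
proof -
  have "(lam k)\<^sup>2 \<le> lam_hi\<^sup>2"
    using lam_bounds[of k] lam_pos[of k] by (intro power_mono) auto
  then have "0 < 1 - lam_hi\<^sup>2 * L\<^sup>2 \<and> 1 - lam_hi\<^sup>2 * L\<^sup>2 \<le> 1 - (lam k)\<^sup>2 * L\<^sup>2"
    using lam_squared_L_squared_less[of lam_hi] lam_lo_pos lam_bounds[of k]
    by (auto intro: mult_right_mono)
  moreover have "0 < 2 * lam_lo * \<eta> * \<mu> \<and> 2 * lam_lo * \<eta> * \<mu> \<le> 2 * lam k * \<eta> * \<mu>"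
    using lam_lo_pos lam_bounds[of k] eta_pos mu_pos by simp
  ultimately show "beta_lo \<le> beta k"
    unfolding beta_def beta_lo_def by (intro parallel_sum_mono) auto
  show "0 < beta k"
    unfolding beta_def using beta_parameters_pos by (rule parallel_sum_pos)
  have "beta k < 1 - (lam k)\<^sup>2 * L\<^sup>2"
    unfolding beta_def using beta_parameters_pos by (rule parallel_sum_less_left)
  then show "beta k < 1" by (smt (verit) zero_le_power2 mult_nonneg_nonneg)
qed

lemma product_pos: "0 < (\<Prod>i<k. 1 - beta i)"
  using beta_bounds by (intro prod_pos) auto

lemma p_pos: "0 < p k"
  using product_pos by (simp add: p_def)

lemma p_0: "p 0 = 1"
  by (simp add: p_def)

lemma p_Suc: "p (Suc k) * (1 - beta k) = p k"
proof -
  have "(\<Prod>i<Suc k. 1 - beta i) = (\<Prod>i<k. 1 - beta i) * (1 - beta k)"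
    by simp
  then show ?thesis
    using product_pos[of k] beta_bounds(3)[of k] by (simp add: p_def)
qed

lemma inverse_p_le: "inverse (p k) \<le> (1 - beta_lo) ^ k"
proof -
  have "(\<Prod>i<k. 1 - beta i) \<le> (\<Prod>i<k. 1 - beta_lo)"
    using beta_bounds by (intro prod_mono) (auto simp: less_imp_le)
  then show ?thesis by (simp add: p_def)
qed

lemma alpha_Suc_le: "alpha (Suc k) \<le> (1 - beta k) * alpha k"
  using alpha_Suc by (simp add: beta_def parallel_sum_def L_def)

lemma one_step_descent:
  assumes v: "v \<in> X"
  shows "(norm (x (Suc k) - v))\<^sup>2
    \<le> (1 - beta k) * (norm (w k - v))\<^sup>2 + 2 * lam k * (inner (F v) (v - y k) + \<eta> * C_H * D_X)"
proof -
  have y_in_\<Omega>: "y k \<in> \<Omega>" using y_in_X X_subset by blast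
  have "norm (G (w' k) - G (y k)) \<le> L * norm (w' k - y k)"
    using lipschitz_onD[OF G_lipschitz w'_in_\<Omega>[of k] y_in_\<Omega>] by (simp add: dist_norm)
  also have "\<dots> \<le> L * norm (w k - y k)"
    using closest_point_lipschitz[OF \<Omega>_convex \<Omega>_closed, of "w k" "y k"] y_in_\<Omega> L_pos
    by (intro mult_left_mono) (auto simp: w'_def closest_point_self dist_norm)
  finally have extragradient: "(norm (x (Suc k) - v))\<^sup>2 \<le> (norm (w k - v))\<^sup>2
      - (1 - (lam k)\<^sup>2 * L\<^sup>2) * (norm (w k - y k))\<^sup>2 + 2 * lam k * inner (G (y k)) (v - y k)"
    using extragradient_projection_inequality[OF X_convex X_closed v
        y_def[of k, folded G_def] x_Suc[of k, folded G_def]] lam_pos[of k] L_pos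
    by simp
  have monotonicity: "inner (G (y k)) (v - y k)
      \<le> inner (F v) (v - y k) + \<eta> * (C_H * D_X - \<mu> * (norm (v - y k))\<^sup>2)"
    unfolding G_def
  proof (rule regularized_operator_inner_le)
    show "0 \<le> inner (F v - F (y k)) (v - y k)"
      using F_monotone v y_in_X by (simp add: monotone_op_def)
    show "\<mu> * (norm (v - y k))\<^sup>2 \<le> inner (H v - H (y k)) (v - y k)"
      using H_strongly_monotone v y_in_X by (simp add: strongly_monotone_op_def)
  qed (use norm_H_le_C_H[OF v] norm_diff_le_D_X[OF v y_in_X] eta_pos in auto)
  have regularized: "2 * lam k * inner (G (y k)) (v - y k)
      \<le> 2 * lam k * (inner (F v) (v - y k) + \<eta> * C_H * D_X) - 2 * lam k * \<eta> * \<mu> * (norm (y k - v))\<^sup>2"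
    using mult_left_mono[OF monotonicity, of "2 * lam k"] lam_pos[of k]
    by (simp add: norm_minus_commute algebra_simps)
  have "beta k * (norm (w k - v))\<^sup>2
      \<le> (1 - (lam k)\<^sup>2 * L\<^sup>2) * (norm (w k - y k))\<^sup>2 + 2 * lam k * \<eta> * \<mu> * (norm (y k - v))\<^sup>2"
    using parallel_sum_norm_add_squared_le[OF beta_parameters_pos[of k], of "w k - y k" "y k - v"]
    by (simp add: beta_def)
  then show ?thesis
    using extragradient regularized by (simp add: algebra_simps)
qed

lemma telescoped_inequality:
  assumes v: "v \<in> X"
  shows "0 \<le> D_X\<^sup>2 + (\<Sum>j<k. p j * delta j
                    + p (Suc j) * (2 * lam j * (inner (F v) (v - y j) + \<eta> * C_H * D_X)))"
proof (rule inertial_telescoping[where \<phi> = "\<lambda>j. (norm (x j - v))\<^sup>2" and c = "\<lambda>j. 1 - beta j"])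
  fix j
  have "prev_it (\<lambda>j. (norm (x j - v))\<^sup>2) j = (norm (prev_it x j - v))\<^sup>2"
    by (simp add: prev_it_def)
  then show "(norm (x (Suc j) - v))\<^sup>2 \<le> (1 - beta j) * ((1 + alpha j) * (norm (x j - v))\<^sup>2
      - alpha j * prev_it (\<lambda>j. (norm (x j - v))\<^sup>2) j + delta j)
      + 2 * lam j * (inner (F v) (v - y j) + \<eta> * C_H * D_X)"
    using one_step_descent[OF v, of j] norm_extrapolation_squared[of "x j" "alpha j" "prev_it x j" v]
    by (simp add: w_def delta_def)
  show "0 \<le> (norm (x j - v))\<^sup>2 \<and> (norm (x j - v))\<^sup>2 \<le> D_X\<^sup>2"
    using norm_diff_le_D_X[OF x_in_X v] by (simp add: power_mono)
  have "p (Suc j) * alpha (Suc j) \<le> p (Suc j) * ((1 - beta j) * alpha j)"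
    using alpha_Suc_le p_pos by (simp add: mult_left_mono less_imp_le)
  then show "p (Suc j) * alpha (Suc j) \<le> p j * alpha j"
    using p_Suc by (simp add: mult.assoc[symmetric])
qed (use p_Suc p_pos p_0 alpha0 alpha_nonneg in auto)

lemma Lam_ge:
  assumes "1 \<le> k" shows "lam_lo * \<eta> * p k \<le> Lam k"
proof -
  obtain m where k: "k = Suc m" using assms by (cases k) auto
  have "lam_lo * \<eta> * p k \<le> lam m * \<eta> * p (Suc m)"
    using lam_bounds[of m] eta_pos p_pos[of k] by (simp add: k mult_right_mono)
  also have "\<dots> \<le> Lam k"
    unfolding Lam_def k using lam_pos eta_pos p_pos
    by (intro member_le_sum) (auto simp: less_imp_le)
  finally show ?thesis .
qed

lemma Lam_pos: "1 \<le> k \<Longrightarrow> 0 < Lam k"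
  using Lam_ge[of k] lam_lo_pos eta_pos p_pos[of k] by (smt (verit) mult_pos_pos)

lemma ybar_in_X: "1 \<le> k \<Longrightarrow> ybar k \<in> X"
  unfolding ybar_def Lam_def
  using Lam_pos[of k] lam_pos eta_pos p_pos y_in_X
  by (intro weighted_mean_in_convex[OF X_convex]) (auto simp: Lam_def less_imp_le)

lemma weighted_sum_eq_ergodic:
  assumes k: "1 \<le> k"
  shows "\<eta> * (\<Sum>j<k. p (Suc j) * (2 * lam j * (inner (F v) (v - y j) + \<eta> * C_H * D_X)))
    = 2 * Lam k * (\<eta> * C_H * D_X - inner (F v) (ybar k - v))"
proof -
  define c where "c j = lam j * \<eta> * p (Suc j)" for j
  have Lam_c: "Lam k = sum c {..<k}"
    and ybar_c: "ybar k = inverse (sum c {..<k}) *\<^sub>R (\<Sum>j<k. c j *\<^sub>R y j)"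
    by (simp_all add: Lam_def ybar_def c_def)
  have "\<eta> * (p (Suc j) * (2 * lam j * (inner (F v) (v - y j) + \<eta> * C_H * D_X)))
      = 2 * (\<eta> * C_H * D_X * c j - c j * inner (F v) (y j - v))" for j
    by (simp add: c_def inner_diff_right algebra_simps)
  then have "\<eta> * (\<Sum>j<k. p (Suc j) * (2 * lam j * (inner (F v) (v - y j) + \<eta> * C_H * D_X)))
      = 2 * (\<eta> * C_H * D_X * Lam k - (\<Sum>j<k. c j * inner (F v) (y j - v)))"
    by (simp add: Lam_c sum_distrib_left sum_subtractf right_diff_distrib)
  also have "(\<Sum>j<k. c j * inner (F v) (y j - v)) = Lam k * inner (F v) (ybar k - v)"
    unfolding Lam_c ybar_c by (rule inner_weighted_mean) (use Lam_pos[OF k] Lam_c in simp)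
  finally show ?thesis by (simp add: algebra_simps)
qed

lemma eta_div_Lam_le:
  assumes k: "1 \<le> k" shows "\<eta> / Lam k \<le> (1 - beta_lo) ^ k / lam_lo"
proof -
  have "\<eta> / Lam k \<le> \<eta> / (lam_lo * \<eta> * p k)"
    using Lam_ge[OF k] Lam_pos[OF k] lam_lo_pos eta_pos p_pos[of k]
    by (intro divide_left_mono) auto
  also have "\<dots> = inverse (p k) / lam_lo"
    using eta_pos by (simp add: field_simps)
  also have "\<dots> \<le> (1 - beta_lo) ^ k / lam_lo"
    using inverse_p_le lam_lo_pos by (simp add: divide_right_mono)
  finally show ?thesis .
qed

lemma ergodic_inner_le:
  assumes k: "1 \<le> k" and v: "v \<in> X"
  shows "inner (F v) (ybar k - v)
    \<le> (1 - beta_lo) ^ k / (2 * lam_lo) * (D_X\<^sup>2 + (\<Sum>j<k. p j * delta j)) + \<eta> * C_H * D_X"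
proof -
  define E where "E = D_X\<^sup>2 + (\<Sum>j<k. p j * delta j)"
  define S where "S = (\<Sum>j<k. p (Suc j) * (2 * lam j * (inner (F v) (v - y j) + \<eta> * C_H * D_X)))"
  have "0 \<le> \<eta> * (E + S)"
    using telescoped_inequality[OF v, of k] eta_pos by (simp add: E_def S_def sum.distrib add.assoc)
  then have "2 * Lam k * (inner (F v) (ybar k - v) - \<eta> * C_H * D_X) \<le> \<eta> * E"
    using weighted_sum_eq_ergodic[OF k, of v] by (simp add: S_def algebra_simps)
  then have "inner (F v) (ybar k - v) - \<eta> * C_H * D_X \<le> \<eta> / Lam k * E / 2"
    using Lam_pos[OF k] by (simp add: pos_le_divide_eq mult.commute mult.left_commute)
  then have "inner (F v) (ybar k - v) \<le> \<eta> / Lam k * E / 2 + \<eta> * C_H * D_X"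
    by simp
  also have "\<eta> / Lam k * E / 2 \<le> (1 - beta_lo) ^ k / lam_lo * E / 2"
  proof -
    have "0 \<le> E"
      unfolding E_def delta_def using p_pos alpha_nonneg
      by (intro add_nonneg_nonneg sum_nonneg) (auto simp: less_imp_le)
    then show ?thesis
      using eta_div_Lam_le[OF k] by (intro divide_right_mono mult_right_mono) auto
  qed
  finally show ?thesis by (simp add: E_def mult.commute)
qed

lemma gap_bound:
  assumes k: "1 \<le> k"
  shows "0 \<le> Gap (ybar k) F X \<and> Gap (ybar k) F X
    \<le> (1 - beta_lo) ^ k / (2 * lam_lo) * (D_X\<^sup>2 + (\<Sum>j<k. p j * delta j))
      + \<eta> * (lam_hi * C_H * D_X / lam_lo)"
proof -
  have "C_H * D_X * lam_lo \<le> C_H * D_X * lam_hi"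
    using lam_bounds[of 0] C_H_nonneg D_X_nonneg by (intro mult_left_mono) auto
  then have CD: "C_H * D_X \<le> lam_hi * C_H * D_X / lam_lo"
    using lam_lo_pos by (simp add: pos_le_divide_eq mult.commute mult.left_commute)
  have "\<eta> * C_H * D_X \<le> \<eta> * (lam_hi * C_H * D_X / lam_lo)"
    using mult_left_mono[OF CD, of \<eta>] eta_pos by (simp add: mult.assoc)
  then have bound: "inner (F v) (ybar k - v)
      \<le> (1 - beta_lo) ^ k / (2 * lam_lo) * (D_X\<^sup>2 + (\<Sum>j<k. p j * delta j))
        + \<eta> * (lam_hi * C_H * D_X / lam_lo)" if "v \<in> X" for v
    using ergodic_inner_le[OF k that] by linarith
  show ?thesis
    using Gap_nonneg[OF ybar_in_X[OF k] bound] Gap_le[OF X_nonempty bound] by blast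
qed

end

theorem proposition4p17:
  fixes F H :: "'a::euclidean_space \<Rightarrow> 'a"
    and DomF DomH X \<Omega> :: "'a set"
    and LF LH \<mu> \<eta> lam_lo lam_hi :: real
    and lam alpha :: "nat \<Rightarrow> real"
    and x w w' y :: "nat \<Rightarrow> 'a"
  assumes monF: "monotone_op F DomF" and monH: "monotone_op H DomH"
    and lipF: "lipschitz_on LF DomF F" and LF_pos: "LF > 0"
    and lipH: "lipschitz_on LH DomH H" and LH_pos: "LH > 0"
    and mu_pos: "\<mu> > 0" and strH: "strongly_monotone_op \<mu> H DomH"
    and X_ne: "X \<noteq> {}" and X_compact: "compact X" and X_convex: "convex X"
    and Om_ne: "\<Omega> \<noteq> {}" and Om_closed: "closed \<Omega>" and Om_convex: "convex \<Omega>"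
    and X_sub: "X \<subseteq> \<Omega>" and Om_sub: "\<Omega> \<subseteq> DomF \<inter> DomH"
    and Q_ne: "VI_sol F X \<noteq> {}"
    and eta_pos: "\<eta> > 0"
    and lam_bounds: "\<And>k. lam_lo \<le> lam k \<and> lam k \<le> lam_hi"
    and lam_lo_pos: "0 < lam_lo" and lam_lo_hi: "lam_lo \<le> lam_hi"
    and lam_hi_lt: "lam_hi < 1 / (LF + \<eta> * LH)"
    and alpha_nonneg: "\<And>k. alpha k \<ge> 0"
    and alpha0: "alpha 0 \<le> 1"
    and alpha_dec: "\<And>k. alpha (Suc k) \<le>
          (1 - inverse (1 / (1 - (lam k)\<^sup>2 * (LF + \<eta> * LH)\<^sup>2) + 1 / (2 * lam k * \<eta> * \<mu>))) * alpha k"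
    and x0: "x 0 \<in> X"
    and w_def: "\<And>k. w k = x k + alpha k *\<^sub>R (x k - prev_it x k)"
    and w'_def: "\<And>k. w' k = closest_point \<Omega> (w k)"
    and y_def: "\<And>k. y k = closest_point X (w k - lam k *\<^sub>R (F (w' k) + \<eta> *\<^sub>R H (w' k)))"
    and x_def: "\<And>k. x (Suc k) = closest_point X (w k - lam k *\<^sub>R (F (y k) + \<eta> *\<^sub>R H (y k)))"
  shows "\<And>k. k \<ge> 1 \<Longrightarrow>
    (let L = LF + \<eta> * LH;
         bet = (\<lambda>i. inverse (1 / (1 - (lam i)\<^sup>2 * L\<^sup>2) + 1 / (2 * lam i * \<eta> * \<mu>)));
         pm = (\<lambda>j. inverse (\<Prod>i<j. (1 - bet i)));
         p = (\<lambda>j. pm (Suc j));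
         \<delta> = (\<lambda>j. alpha j * (1 + alpha j) * (norm (x j - prev_it x j))\<^sup>2);
         Lam = (\<Sum>j<k. lam j * \<eta> * p j);
         ybar = inverse Lam *\<^sub>R (\<Sum>j<k. (lam j * \<eta> * p j) *\<^sub>R y j);
         betc = inverse (1 / (1 - lam_hi\<^sup>2 * L\<^sup>2) + 1 / (2 * lam_lo * \<eta> * \<mu>));
         DX = diameter X;
         CH = (SUP z\<in>X. norm (H z))
     in 0 \<le> Gap ybar F X \<and>
        Gap ybar F X \<le> (1 - betc) ^ k / (2 * lam_lo) * (DX\<^sup>2 + (\<Sum>j<k. pm j * \<delta> j))
                         + \<eta> * (lam_hi * CH * DX / lam_lo))"
proof -
  have "X \<subseteq> DomF" "X \<subseteq> DomH" using X_sub Om_sub by auto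
  interpret inertial_regularized_extragradient F H X \<Omega> LF LH \<mu> \<eta> lam_lo lam_hi lam alpha x w w' y
  proof
    show "monotone_op F X" using monF \<open>X \<subseteq> DomF\<close> by (auto simp: monotone_op_def)
    show "strongly_monotone_op \<mu> H X"
      using strH \<open>X \<subseteq> DomH\<close> by (auto simp: strongly_monotone_op_def)
    show "lipschitz_on LF \<Omega> F" using lipF Om_sub by (auto intro: lipschitz_on_subset)
    show "lipschitz_on LH \<Omega> H" using lipH Om_sub by (auto intro: lipschitz_on_subset)
  qed (fact assms)+
  fix k :: nat assume "k \<ge> 1"
  show "?thesis k"
    using gap_bound[OF \<open>k \<ge> 1\<close>]
    unfolding Let_def L_def beta_def beta_lo_def parallel_sum_def p_def delta_def Lam_def ybar_def
      D_X_def C_H_def .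
qed

end
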